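(* Let $Q$ be a QNP. If a policy $\pi$ solves the FOND problem $P=T(Q)$ (i.e. is a strong cyclic solution of it), then the controller $\pi_M$ solves $Q$.
   Context: QNPs: $Q=\langle F,V,I,O,G\rangle$ with propositional variables $F$, numerical variables $V$ (non-negative reals), literals $p,\neg p$, $X=0$, $X>0$; actions with precondition $Pre(a)$, propositional effects $\mathit{Eff}(a)$, numerical effects $N(a)\subseteq\{Inc(X),Dec(X)\}$ (at most one per variable; $Dec(X)\in N(a)$ implies $X>0\in Pre(a)$). A state $s$ assigns truth values to $F$ and reals $\ge0$ to $V$; initial states satisfy $I$ (closed world); goal states satisfy $G$; for applicable $a$, $s'\in F_Q(a,s)$ iff $s'$ applies the propositional effects, $s'[X]>s[X]$ for $Inc(X)$, $s'[X]<s[X]$ for $Dec(X)$, rest unchanged. The boolean state $\bar s$ is the truth valuation of $s$ on atoms $p\in F$ and $X=0$. The FOND problem $T(Q)$: $n=|F|+|V|$, $Max=1+2^n$. Propositional variables: $F$, $p_{X=0}$ ($X\in V$; $X=0$/$X>0$ denote $p_{X=0}$/$\neg p_{X=0}$) — these make up the boolean states of $Q$ — and the memory atoms $in(X)$, $depth(d)$ ($0\le d\le|V|$), $index(X,d)$ ($1\le d\le|V|$), counters $c(d)$ ($0\le d\le|V|$), $c_T$ over $\{0,\dots,Max\}$ encoded in binary. Initial state: $I$ plus $depth(0)$, counters $0$, other memory atoms false; goal $G$. Actions: $Push(X,d)$ ($0\le d<|V|$): pre $\neg in(X),depth(d),c(d)<Max$; eff $in(X),index(X,d+1),depth(d+1),\neg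 depth(d),c(d):=c(d)+1,c(d+1):=0$. $Pop(X,d)$ ($1\le d\le|V|$): pre $in(X),index(X,d),depth(d)$; eff $\neg in(X),\neg index(X,d),\neg depth(d),depth(d-1)$. $Move$: pre $depth(0),c_T<Max$; eff $c_T:=c_T+1$. For $a\in O$ with no $Dec$ effect: action $a$ with pre $Pre(a)$ plus $\neg in(Y)$ for each $Inc(Y)\in N(a)$, eff $\mathit{Eff}(a)$ plus $Y>0$ for each $Inc(Y)\in N(a)$. For $a$ with a $Dec$ effect, $X$ with $Dec(X)\in N(a)$, $1\le d\le|V|$: action $a(X,d)$ with pre $Pre(a)$, $\neg in(Y)$ for $Inc(Y)\in N(a)$, $index(X,d)$; eff $\mathit{Eff}(a)$, $Y>0$ for $Inc(Y)\in N(a)$, nondeterministic $Z>0\mid Z=0$ for each $Dec(Z)\in N(a)$, $c(d'):=0$ for $d\le d'\le|V|$. A strong cyclic solution of a FOND problem is a policy such that from every state reachable from the initial state under $\pi$ some goal state is reachable under $\pi$. Controller $\pi_M$: a memory state $m$ is a valuation of the memory atoms, with $m_0$ the initial one; a state of $T(Q)$ is a pair $(\bar s,m)$. An execution of $\pi_M$ on $Q$ is a sequence of pairs $(s_i,m_i)$ with $s_0$ an initial state of $Q$ and $m_0$ the initial memory, where $b_i=\pi(\bar s_i,m_i)$ is defined and its preconditions hold in $(\bar s_i,m_i)$ (numerical literals evaluated in $s_i$), and: if $b_i$ is $Push$, $Pop$ or $Move$, then $s_{i+1}=s_i$ and $m_{i+1}$ results from $m_i$ by the effects of $b_i$; if $b_i$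 is $a$ or $a(X,d)$, then $s_{i+1}\in F_Q(a,s_i)$ and $m_{i+1}$ results from $m_i$ by the counter effects of $b_i$. For $\epsilon>0$ the execution is an $\epsilon$-execution if each change of a numerical variable has magnitude $\ge\epsilon$ unless it goes from a value $<\epsilon$ to $0$. It is maximal if infinite without goal, ending at its first pair with $s_i$ a goal state, or ending where $\pi$ is undefined or its action inapplicable. $\pi_M$ solves $Q$ iff for every $\epsilon>0$ every maximal $\epsilon$-execution reaches a pair whose $Q$-state is a goal state. *)

theory Defs
  imports Complex_Main
begin

text \<open>Atoms of boolean states: a propositional variable p, or the atom p_{X=0}.\<close>
datatype ('f, 'v) atom = PA 'f | ZA 'v

text \<open>A literal is an atom together with the required truth value.
  (PA p, True) = p, (PA p, False) = not p, (ZA X, True) = (X = 0), (ZA X, False) = (X > 0).\<close>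
type_synonym ('f, 'v) lit = "('f, 'v) atom \<times> bool"

type_synonym ('f, 'v) bstate = "('f, 'v) atom \<Rightarrow> bool"

definition lit_holds :: "('f, 'v) bstate \<Rightarrow> ('f, 'v) lit \<Rightarrow> bool" where
  "lit_holds b l = (b (fst l) = snd l)"

record ('f, 'v, 'a) qnp =
  QF   :: "'f set"
  QV   :: "'v set"
  QI   :: "('f, 'v) lit set"
  QO   :: "'a set"
  Qpre :: "'a \<Rightarrow> ('f, 'v) lit set"
  Qeff :: "'a \<Rightarrow> ('f \<times> bool) set"
  Qinc :: "'a \<Rightarrow> 'v set"
  Qdec :: "'a \<Rightarrow> 'v set"
  QG   :: "('f, 'v) lit set"

definition atom_in :: "('f, 'v, 'a) qnp \<Rightarrow> ('f, 'v) atom \<Rightarrow> bool" where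
  "atom_in Q z = (case z of PA p \<Rightarrow> p \<in> QF Q | ZA X \<Rightarrow> X \<in> QV Q)"

definition wf_qnp :: "('f, 'v, 'a) qnp \<Rightarrow> bool" where
  "wf_qnp Q \<longleftrightarrow> finite (QF Q) \<and> finite (QV Q)
     \<and> (\<forall>l \<in> QI Q \<union> QG Q. atom_in Q (fst l))
     \<and> (\<forall>a \<in> QO Q.
          (\<forall>l \<in> Qpre Q a. atom_in Q (fst l))
        \<and> (\<forall>e \<in> Qeff Q a. fst e \<in> QF Q)
        \<and> \<not> (\<exists>p. (p, True) \<in> Qeff Q a \<and> (p, False) \<in> Qeff Q a)
        \<and> Qinc Q a \<subseteq> QV Q \<and> Qdec Q a \<subseteq> QV Q
        \<and> Qinc Q a \<inter> Qdec Q a = {}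
        \<and> (\<forall>X \<in> Qdec Q a. (ZA X, False) \<in> Qpre Q a))"

record ('f, 'v) qstate =
  qb :: "'f \<Rightarrow> bool"
  qn :: "'v \<Rightarrow> real"

definition qstate_ok :: "('f, 'v) qstate \<Rightarrow> bool" where
  "qstate_ok s \<longleftrightarrow> (\<forall>X. 0 \<le> qn s X)"

definition bar :: "('f, 'v) qstate \<Rightarrow> ('f, 'v) bstate" where
  "bar s z = (case z of PA p \<Rightarrow> qb s p | ZA X \<Rightarrow> qn s X = 0)"

text \<open>Closed-world valuation of the initial literals.\<close>
definition init_b :: "('f, 'v, 'a) qnp \<Rightarrow> ('f, 'v) bstate" where
  "init_b Q z = ((z, True) \<in> QI Q)"

definition qinit :: "('f, 'v, 'a) qnp \<Rightarrow> ('f, 'v) qstate \<Rightarrow> bool" where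
  "qinit Q s \<longleftrightarrow> qstate_ok s \<and> bar s = init_b Q"

definition qgoal :: "('f, 'v, 'a) qnp \<Rightarrow> ('f, 'v) qstate \<Rightarrow> bool" where
  "qgoal Q s \<longleftrightarrow> (\<forall>l \<in> QG Q. lit_holds (bar s) l)"

definition apply_peff :: "('f \<times> bool) set \<Rightarrow> 'f \<Rightarrow> bool \<Rightarrow> bool" where
  "apply_peff E p old = (if (p, True) \<in> E then True else if (p, False) \<in> E then False else old)"

text \<open>Transition function F_Q(a, s) of the QNP (empty if a is not applicable).\<close>
definition qsucc :: "('f, 'v, 'a) qnp \<Rightarrow> 'a \<Rightarrow> ('f, 'v) qstate \<Rightarrow> ('f, 'v) qstate set" where
  "qsucc Q a s = {s'. a \<in> QO Q \<and> (\<forall>l \<in> Qpre Q a. lit_holds (bar s) l) \<and> qstate_ok s'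
      \<and> (\<forall>p. qb s' p = apply_peff (Qeff Q a) p (qb s p))
      \<and> (\<forall>X. (X \<in> Qinc Q a \<longrightarrow> qn s' X > qn s X)
            \<and> (X \<in> Qdec Q a \<longrightarrow> qn s' X < qn s X)
            \<and> (X \<notin> Qinc Q a \<and> X \<notin> Qdec Q a \<longrightarrow> qn s' X = qn s X))}"

section \<open>The FOND translation T(Q)\<close>

text \<open>Memory atoms: in(X), depth(d), index(X,d), counters c(d) and c_T
  (counters are represented by their numeric values in {0..Max}).\<close>
record 'v mem =
  m_in    :: "'v \<Rightarrow> bool"
  m_depth :: "nat \<Rightarrow> bool"
  m_index :: "'v \<Rightarrow> nat \<Rightarrow> bool"
  m_c     :: "nat \<Rightarrow> nat"
  m_cT    :: "nat"

definition m0 :: "'v mem" where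
  "m0 = \<lparr> m_in = (\<lambda>_. False), m_depth = (\<lambda>d. d = 0), m_index = (\<lambda>_ _. False),
          m_c = (\<lambda>_. 0), m_cT = 0 \<rparr>"

type_synonym ('f, 'v) tstate = "('f, 'v) bstate \<times> 'v mem"

datatype ('v, 'a) tact = Push 'v nat | Pop 'v nat | Move | Op 'a | OpDec 'a 'v nat

definition nV :: "('f, 'v, 'a) qnp \<Rightarrow> nat" where
  "nV Q = card (QV Q)"

definition Maxc :: "('f, 'v, 'a) qnp \<Rightarrow> nat" where
  "Maxc Q = 1 + 2 ^ (card (QF Q) + card (QV Q))"

definition tact_valid :: "('f, 'v, 'a) qnp \<Rightarrow> ('v, 'a) tact \<Rightarrow> bool" where
  "tact_valid Q b = (case b of
      Push X d \<Rightarrow> X \<in> QV Q \<and> d < nV Q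
    | Pop X d \<Rightarrow> X \<in> QV Q \<and> 1 \<le> d \<and> d \<le> nV Q
    | Move \<Rightarrow> True
    | Op a \<Rightarrow> a \<in> QO Q \<and> Qdec Q a = {}
    | OpDec a X d \<Rightarrow> a \<in> QO Q \<and> X \<in> Qdec Q a \<and> 1 \<le> d \<and> d \<le> nV Q)"

definition tpre :: "('f, 'v, 'a) qnp \<Rightarrow> ('v, 'a) tact \<Rightarrow> ('f, 'v) tstate \<Rightarrow> bool" where
  "tpre Q b t = (let bs = fst t; m = snd t in case b of
      Push X d \<Rightarrow> \<not> m_in m X \<and> m_depth m d \<and> m_c m d < Maxc Q
    | Pop X d \<Rightarrow> m_in m X \<and> m_index m X d \<and> m_depth m d
    | Move \<Rightarrow> m_depth m 0 \<and> m_cT m < Maxc Q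
    | Op a \<Rightarrow> (\<forall>l \<in> Qpre Q a. lit_holds bs l) \<and> (\<forall>Y \<in> Qinc Q a. \<not> m_in m Y)
    | OpDec a X d \<Rightarrow> (\<forall>l \<in> Qpre Q a. lit_holds bs l) \<and> (\<forall>Y \<in> Qinc Q a. \<not> m_in m Y)
                     \<and> m_index m X d)"

definition mem_eff :: "('f, 'v, 'a) qnp \<Rightarrow> ('v, 'a) tact \<Rightarrow> 'v mem \<Rightarrow> 'v mem" where
  "mem_eff Q b m = (case b of
      Push X d \<Rightarrow> m\<lparr> m_in := (m_in m)(X := True),
                     m_index := (m_index m)(X := (m_index m X)(Suc d := True)),
                     m_depth := (m_depth m)(d := False, Suc d := True),
                     m_c := (m_c m)(d := m_c m d + 1, Suc d := 0) \<rparr>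
    | Pop X d \<Rightarrow> m\<lparr> m_in := (m_in m)(X := False),
                    m_index := (m_index m)(X := (m_index m X)(d := False)),
                    m_depth := (m_depth m)(d := False, d - 1 := True) \<rparr>
    | Move \<Rightarrow> m\<lparr> m_cT := m_cT m + 1 \<rparr>
    | Op a \<Rightarrow> m
    | OpDec a X d \<Rightarrow> m\<lparr> m_c := (\<lambda>d'. if d \<le> d' \<and> d' \<le> nV Q then 0 else m_c m d') \<rparr>)"

definition op_bool :: "('f, 'v, 'a) qnp \<Rightarrow> 'a \<Rightarrow> ('f, 'v) bstate \<Rightarrow> ('f, 'v) bstate" where
  "op_bool Q a bs = (\<lambda>z. case z of
      PA p \<Rightarrow> apply_peff (Qeff Q a) p (bs z)
    | ZA Y \<Rightarrow> (if Y \<in> Qinc Q a then False else bs z))"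

text \<open>Successor states in T(Q); for a(X,d) the atoms Z=0 with Dec(Z) in N(a) are
  set nondeterministically.\<close>
definition tsucc :: "('f, 'v, 'a) qnp \<Rightarrow> ('v, 'a) tact \<Rightarrow> ('f, 'v) tstate \<Rightarrow> ('f, 'v) tstate set" where
  "tsucc Q b t = (case b of
      Op a \<Rightarrow> {(op_bool Q a (fst t), mem_eff Q b (snd t))}
    | OpDec a X d \<Rightarrow> {(bs', mem_eff Q b (snd t)) | bs'.
          \<forall>z. (\<forall>Z \<in> Qdec Q a. z \<noteq> ZA Z) \<longrightarrow> bs' z = op_bool Q a (fst t) z}
    | _ \<Rightarrow> {(fst t, mem_eff Q b (snd t))})"

definition tinit :: "('f, 'v, 'a) qnp \<Rightarrow> ('f, 'v) tstate" where
  "tinit Q = (init_b Q, m0)"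

definition tgoal :: "('f, 'v, 'a) qnp \<Rightarrow> ('f, 'v) tstate \<Rightarrow> bool" where
  "tgoal Q t \<longleftrightarrow> (\<forall>l \<in> QG Q. lit_holds (fst t) l)"

type_synonym ('f, 'v, 'a) policy = "('f, 'v) tstate \<Rightarrow> ('v, 'a) tact option"

inductive treach :: "('f, 'v, 'a) qnp \<Rightarrow> ('f, 'v, 'a) policy \<Rightarrow> ('f, 'v) tstate \<Rightarrow> ('f, 'v) tstate \<Rightarrow> bool"
  for Q \<pi> where
  refl: "treach Q \<pi> t t"
| step: "\<lbrakk> treach Q \<pi> t t'; \<not> tgoal Q t'; \<pi> t' = Some b; tact_valid Q b; tpre Q b t';
           t'' \<in> tsucc Q b t' \<rbrakk> \<Longrightarrow> treach Q \<pi> t t''"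

definition strong_cyclic :: "('f, 'v, 'a) qnp \<Rightarrow> ('f, 'v, 'a) policy \<Rightarrow> bool" where
  "strong_cyclic Q \<pi> \<longleftrightarrow>
     (\<forall>t. treach Q \<pi> (tinit Q) t \<longrightarrow> (\<exists>g. treach Q \<pi> t g \<and> tgoal Q g))"

section \<open>The controller \<pi>_M on Q\<close>

definition eps_ok :: "real \<Rightarrow> ('f, 'v) qstate \<Rightarrow> ('f, 'v) qstate \<Rightarrow> bool" where
  "eps_ok \<epsilon> s s' \<longleftrightarrow> (\<forall>X. qn s' X \<noteq> qn s X \<longrightarrow>
      (\<bar>qn s' X - qn s X\<bar> \<ge> \<epsilon> \<or> (qn s X < \<epsilon> \<and> qn s' X = 0)))"

definition ctrl_enabled :: "('f, 'v, 'a) qnp \<Rightarrow> ('f, 'v, 'a) policy \<Rightarrow> ('f, 'v) qstate \<times> 'v mem \<Rightarrow> bool" where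
  "ctrl_enabled Q \<pi> x \<longleftrightarrow> (\<exists>b. \<pi> (bar (fst x), snd x) = Some b \<and> tact_valid Q b
                               \<and> tpre Q b (bar (fst x), snd x))"

definition cstep :: "('f, 'v, 'a) qnp \<Rightarrow> ('f, 'v, 'a) policy \<Rightarrow> real
    \<Rightarrow> ('f, 'v) qstate \<times> 'v mem \<Rightarrow> ('f, 'v) qstate \<times> 'v mem \<Rightarrow> bool" where
  "cstep Q \<pi> \<epsilon> x x' \<longleftrightarrow> (\<exists>b. \<pi> (bar (fst x), snd x) = Some b \<and> tact_valid Q b
      \<and> tpre Q b (bar (fst x), snd x)
      \<and> snd x' = mem_eff Q b (snd x)
      \<and> (case b of
           Op a \<Rightarrow> fst x' \<in> qsucc Q a (fst x)
         | OpDec a X d \<Rightarrow> fst x' \<in> qsucc Q a (fst x)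
         | _ \<Rightarrow> fst x' = fst x)
      \<and> eps_ok \<epsilon> (fst x) (fst x'))"

definition max_fin_exec :: "('f, 'v, 'a) qnp \<Rightarrow> ('f, 'v, 'a) policy \<Rightarrow> real
    \<Rightarrow> (('f, 'v) qstate \<times> 'v mem) list \<Rightarrow> bool" where
  "max_fin_exec Q \<pi> \<epsilon> xs \<longleftrightarrow> xs \<noteq> [] \<and> qinit Q (fst (hd xs)) \<and> snd (hd xs) = m0
     \<and> (\<forall>i. Suc i < length xs \<longrightarrow> cstep Q \<pi> \<epsilon> (xs ! i) (xs ! Suc i))
     \<and> ((qgoal Q (fst (last xs)) \<and> (\<forall>i. Suc i < length xs \<longrightarrow> \<not> qgoal Q (fst (xs ! i))))
        \<or> \<not> ctrl_enabled Q \<pi> (last xs))"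

definition max_inf_exec :: "('f, 'v, 'a) qnp \<Rightarrow> ('f, 'v, 'a) policy \<Rightarrow> real
    \<Rightarrow> (nat \<Rightarrow> ('f, 'v) qstate \<times> 'v mem) \<Rightarrow> bool" where
  "max_inf_exec Q \<pi> \<epsilon> f \<longleftrightarrow> qinit Q (fst (f 0)) \<and> snd (f 0) = m0
     \<and> (\<forall>i. cstep Q \<pi> \<epsilon> (f i) (f (Suc i)))
     \<and> (\<forall>i. \<not> qgoal Q (fst (f i)))"

definition controller_solves :: "('f, 'v, 'a) qnp \<Rightarrow> ('f, 'v, 'a) policy \<Rightarrow> bool" where
  "controller_solves Q \<pi> \<longleftrightarrow> (\<forall>\<epsilon>::real. \<epsilon> > 0 \<longrightarrow>
      (\<forall>xs. max_fin_exec Q \<pi> \<epsilon> xs \<longrightarrow> (\<exists>x \<in> set xs. qgoal Q (fst x)))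
    \<and> (\<forall>f. max_inf_exec Q \<pi> \<epsilon> f \<longrightarrow> (\<exists>i. qgoal Q (fst (f i)))))"

end

theory Submission
  imports Defs
begin

text \<open>
  Along an \<open>\<epsilon>\<close>-execution of \<open>\<pi>\<^sub>M\<close> each pair \<open>(s, m)\<close> is observed as the state
  \<open>(bar s, m)\<close> of \<open>T(Q)\<close>, and each controller step is a transition of \<open>T(Q)\<close> under \<open>\<pi>\<close>.
  So every observed state is \<open>\<pi>\<close>-reachable, and strong cyclicity makes \<open>\<pi>\<close> applicable
  at any non-goal state: a maximal finite execution must end in a goal.

  For an infinite non-goal execution one shows by induction on \<open>d\<close> that the stack
  levels \<open>1..d\<close> eventually freeze. A variable indexed at a frozen level stays on the
  stack, so it never grows, and every \<open>a(X,d')\<close> lowers it by \<open>\<epsilon>\<close> or to 0; hence these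
  decrements stop. Then nothing resets the counter \<open>c(d)\<close>, which is bounded by \<open>Max\<close>,
  so pushes at depth \<open>d\<close> stop, after which level \<open>d + 1\<close> can only empty, so pops there
  stop too. At \<open>d = |V|\<close> no action \<open>a(X,d)\<close> is left, and from then on \<open>T(Q)\<close> is
  deterministic along the execution: the goal that strong cyclicity promises would
  have to lie on the execution itself.
\<close>

lemma eventually_not_by_descent:
  fixes g :: "nat \<Rightarrow> real"
  assumes "\<epsilon> > 0"
    and "\<forall>\<^sub>F t in sequentially. g (Suc t) \<le> g t \<and> (P t \<longrightarrow> B \<le> g t \<and> g (Suc t) \<le> g t - \<epsilon>)"
  shows "\<forall>\<^sub>F t in sequentially. \<not> P t"
proof (rule ccontr)
  obtain T where T: "\<And>t. t \<ge> T \<Longrightarrow> g (Suc t) \<le> g t \<and> (P t \<longrightarrow> B \<le> g t \<and> g (Suc t) \<le> g t - \<epsilon>)"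
    using assms(2) by (auto simp: eventually_sequentially)
  have mono: "g u \<le> g t" if "T \<le> t" "t \<le> u" for t u
    using that(2)
  proof (induction u rule: dec_induct)
    case (step n)
    then show ?case using T[of n] that(1) by linarith
  qed simp
  assume "\<not> (\<forall>\<^sub>F t in sequentially. \<not> P t)"
  then have often: "\<exists>u\<ge>t. P u" for t
    by (simp add: not_eventually frequently_sequentially)
  have descent: "\<exists>t\<ge>T. P t \<and> g t \<le> g T - real k * \<epsilon>" for k
  proof (induction k)
    case 0
    then show ?case using often[of T] mono by fastforce
  next
    case (Suc k)
    then obtain t where t: "t \<ge> T" "P t" "g t \<le> g T - real k * \<epsilon>" by blast
    obtain u where u: "u \<ge> Suc t" "P u" using often by blast
    have "g u \<le> g (Suc t)" using mono t(1) u(1) by simp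
    also have "\<dots> \<le> g t - \<epsilon>" using T t by blast
    finally have "g u \<le> g T - real (Suc k) * \<epsilon>" using t(3) by (simp add: algebra_simps)
    then show ?case using t(1) u by (intro exI[of _ u]) simp
  qed
  obtain k :: nat where k: "real k * \<epsilon> > g T - B"
    using reals_Archimedean3[OF assms(1)] by blast
  then obtain t where "t \<ge> T" "P t" "g t \<le> g T - real k * \<epsilon>"
    using descent by blast
  then show False using T k by force
qed

text \<open>\<open>Push X e\<close> writes stack level \<open>e + 1\<close>, \<open>Pop X e\<close> clears level \<open>e\<close>.\<close>

fun changes_stack_upto :: "nat \<Rightarrow> ('v, 'a) tact \<Rightarrow> bool" where
  "changes_stack_upto d (Push X e) \<longleftrightarrow> e < d"
| "changes_stack_upto d (Pop X e) \<longleftrightarrow> e \<le> d"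
| "changes_stack_upto d _ \<longleftrightarrow> False"

lemma changes_stack_upto_Suc:
  "changes_stack_upto (Suc d) b \<longleftrightarrow>
    changes_stack_upto d b \<or> (\<exists>X. b = Push X d) \<or> (\<exists>X. b = Pop X (Suc d))"
  by (cases b) auto

lemma m_in_mem_eff:
  "m_in (mem_eff Q b m) X = (case b of
      Push Y d \<Rightarrow> m_in m X \<or> X = Y
    | Pop Y d \<Rightarrow> m_in m X \<and> X \<noteq> Y
    | _ \<Rightarrow> m_in m X)"
  by (cases b) (auto simp: mem_eff_def)

lemma m_index_mem_eff:
  "m_index (mem_eff Q b m) X e = (case b of
      Push Y d \<Rightarrow> m_index m X e \<or> (X = Y \<and> e = Suc d)
    | Pop Y d \<Rightarrow> m_index m X e \<and> \<not> (X = Y \<and> e = d)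
    | _ \<Rightarrow> m_index m X e)"
  by (cases b) (auto simp: mem_eff_def)

lemma m_c_mem_eff:
  "m_c (mem_eff Q b m) e = (case b of
      Push Y d \<Rightarrow> (if e = Suc d then 0 else if e = d then Suc (m_c m e) else m_c m e)
    | OpDec a Y d \<Rightarrow> (if d \<le> e \<and> e \<le> nV Q then 0 else m_c m e)
    | _ \<Rightarrow> m_c m e)"
  by (cases b) (auto simp: mem_eff_def)

lemma m_index_mem_eff_stable:
  assumes "\<not> changes_stack_upto d b" "e \<le> d"
  shows "m_index (mem_eff Q b m) X e = m_index m X e"
  using assms by (cases b) (auto simp: m_index_mem_eff)

lemma m_index_mem_eff_Suc:
  assumes "\<forall>Y. b \<noteq> Push Y d" "m_index (mem_eff Q b m) X (Suc d)"
  shows "m_index m X (Suc d)"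
  using assms by (cases b) (auto simp: m_index_mem_eff)

lemma m_c_mem_eff_mono:
  assumes "\<not> changes_stack_upto d b" "\<forall>a X e. b = OpDec a X e \<longrightarrow> d < e"
  shows "m_c m d \<le> m_c (mem_eff Q b m) d"
  using assms by (cases b) (auto simp: m_c_mem_eff)

definition stack_wf :: "'v mem \<Rightarrow> bool" where
  "stack_wf m \<longleftrightarrow> (\<forall>X d. m_index m X d \<longrightarrow> m_in m X \<and> (\<forall>d'. m_index m X d' \<longrightarrow> d' = d))"

lemma stack_wf_m0: "stack_wf m0"
  by (simp add: stack_wf_def m0_def)

lemma stack_wf_mem_eff:
  assumes "stack_wf m" "tpre Q b (bs, m)"
  shows "stack_wf (mem_eff Q b m)"
  using assms
  by (cases b) (auto simp: stack_wf_def tpre_def m_index_mem_eff m_in_mem_eff)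

lemma qsucc_le_unless_inc:
  assumes "s' \<in> qsucc Q a s" "X \<notin> Qinc Q a"
  shows "qn s' X \<le> qn s X"
  using assms by (cases "X \<in> Qdec Q a") (auto simp: qsucc_def)

lemma bar_qsucc:
  assumes "s' \<in> qsucc Q a s" "qstate_ok s" "\<forall>Z \<in> Qdec Q a. z \<noteq> ZA Z"
  shows "bar s' z = op_bool Q a (bar s) z"
proof (cases z)
  case (ZA Y)
  then have "Y \<notin> Qdec Q a" "0 \<le> qn s Y" using assms(2,3) by (auto simp: qstate_ok_def)
  then show ?thesis using assms(1) ZA by (auto simp: qsucc_def bar_def op_bool_def)
qed (use assms(1) in \<open>simp add: qsucc_def bar_def op_bool_def\<close>)

lemma tsucc_deterministic:
  assumes "\<forall>a X d. b \<noteq> OpDec a X d" "x \<in> tsucc Q b t" "y \<in> tsucc Q b t"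
  shows "x = y"
  using assms by (cases b) (auto simp: tsucc_def)

definition tstate_of :: "('f, 'v) qstate \<times> 'v mem \<Rightarrow> ('f, 'v) tstate" where
  "tstate_of x = (bar (fst x), snd x)"

lemma tgoal_tstate_of [simp]: "tgoal Q (tstate_of x) \<longleftrightarrow> qgoal Q (fst x)"
  by (simp add: tgoal_def qgoal_def tstate_of_def)

lemma cstepE:
  assumes "cstep Q \<pi> \<epsilon> x x'"
  obtains b where "\<pi> (tstate_of x) = Some b" "tact_valid Q b" "tpre Q b (tstate_of x)"
    "snd x' = mem_eff Q b (snd x)"
    "case b of Op a \<Rightarrow> fst x' \<in> qsucc Q a (fst x)
       | OpDec a X d \<Rightarrow> fst x' \<in> qsucc Q a (fst x) | _ \<Rightarrow> fst x' = fst x"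
    "eps_ok \<epsilon> (fst x) (fst x')"
  using assms unfolding cstep_def tstate_of_def by fastforce

lemma qstate_ok_cstep:
  assumes "cstep Q \<pi> \<epsilon> x x'" "qstate_ok (fst x)"
  shows "qstate_ok (fst x')"
proof -
  obtain b where "\<pi> (tstate_of x) = Some b"
    and "case b of Op a \<Rightarrow> fst x' \<in> qsucc Q a (fst x)
      | OpDec a X d \<Rightarrow> fst x' \<in> qsucc Q a (fst x) | _ \<Rightarrow> fst x' = fst x"
    using cstepE[OF assms(1)] by metis
  then show ?thesis using assms(2) by (cases b) (simp_all add: qsucc_def)
qed

lemma cstep_tsucc:
  assumes "cstep Q \<pi> \<epsilon> x x'" "qstate_ok (fst x)"
  obtains b where "\<pi> (tstate_of x) = Some b" "tact_valid Q b" "tpre Q b (tstate_of x)"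
    "tstate_of x' \<in> tsucc Q b (tstate_of x)"
proof -
  obtain b where b: "\<pi> (tstate_of x) = Some b" "tact_valid Q b" "tpre Q b (tstate_of x)"
    and mem: "snd x' = mem_eff Q b (snd x)"
    and st: "case b of Op a \<Rightarrow> fst x' \<in> qsucc Q a (fst x)
               | OpDec a X d \<Rightarrow> fst x' \<in> qsucc Q a (fst x) | _ \<Rightarrow> fst x' = fst x"
    using assms(1) by (rule cstepE)
  have "tstate_of x' \<in> tsucc Q b (tstate_of x)"
  proof (cases b)
    case (Op a)
    then have "fst x' \<in> qsucc Q a (fst x)" "Qdec Q a = {}"
      using st b(2) by (auto simp: tact_valid_def)
    then have "bar (fst x') = op_bool Q a (bar (fst x))"
      by (auto intro!: ext bar_qsucc[OF _ assms(2)])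
    then show ?thesis using Op mem by (simp add: tsucc_def tstate_of_def)
  next
    case (OpDec a X d)
    then have q: "fst x' \<in> qsucc Q a (fst x)" using st by simp
    show ?thesis
      using bar_qsucc[OF q assms(2)] mem OpDec by (auto simp: tsucc_def tstate_of_def)
  qed (use st mem in \<open>auto simp: tsucc_def tstate_of_def\<close>)
  with b that show thesis by blast
qed

lemma treach_execution:
  assumes "qinit Q (fst (x 0))" "snd (x 0) = m0"
    and "\<forall>i<n. cstep Q \<pi> \<epsilon> (x i) (x (Suc i)) \<and> \<not> qgoal Q (fst (x i))"
  shows "treach Q \<pi> (tinit Q) (tstate_of (x n)) \<and> qstate_ok (fst (x n))"
  using assms(3)
proof (induction n)
  case 0
  have "tstate_of (x 0) = tinit Q"
    using assms(1,2) by (simp add: qinit_def tstate_of_def tinit_def)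
  then show ?case using assms(1) treach.refl by (metis qinit_def)
next
  case (Suc n)
  then have reach: "treach Q \<pi> (tinit Q) (tstate_of (x n))" and ok: "qstate_ok (fst (x n))"
    and step: "cstep Q \<pi> \<epsilon> (x n) (x (Suc n))" and no_goal: "\<not> qgoal Q (fst (x n))"
    by auto
  obtain b where "\<pi> (tstate_of (x n)) = Some b" "tact_valid Q b" "tpre Q b (tstate_of (x n))"
    "tstate_of (x (Suc n)) \<in> tsucc Q b (tstate_of (x n))"
    using cstep_tsucc[OF step ok] .
  with reach no_goal have "treach Q \<pi> (tinit Q) (tstate_of (x (Suc n)))"
    by (auto intro: treach.step)
  then show ?case using qstate_ok_cstep[OF step ok] by simp
qed

lemma treach_start_enabled:
  assumes "treach Q \<pi> t g"
  shows "t = g \<or> (\<exists>b. \<pi> t = Some b \<and> tact_valid Q b \<and> tpre Q b t)"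
  using assms by induction auto

lemma strong_cyclic_enabled:
  assumes "strong_cyclic Q \<pi>" "treach Q \<pi> (tinit Q) t" "\<not> tgoal Q t"
  shows "\<exists>b. \<pi> t = Some b \<and> tact_valid Q b \<and> tpre Q b t"
proof -
  obtain g where "treach Q \<pi> t g" "tgoal Q g"
    using assms(1,2) unfolding strong_cyclic_def by blast
  then show ?thesis using treach_start_enabled[of Q \<pi> t g] assms(3) by auto
qed

lemma max_fin_exec_reaches_goal:
  assumes "strong_cyclic Q \<pi>" "max_fin_exec Q \<pi> \<epsilon> xs"
  shows "\<exists>x \<in> set xs. qgoal Q (fst x)"
proof (rule ccontr)
  assume no_goal: "\<not> (\<exists>x \<in> set xs. qgoal Q (fst x))"
  have ne: "xs \<noteq> []" and hd: "qinit Q (fst (hd xs))" "snd (hd xs) = m0"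
    and steps: "\<forall>i. Suc i < length xs \<longrightarrow> cstep Q \<pi> \<epsilon> (xs ! i) (xs ! Suc i)"
    and maximal: "qgoal Q (fst (last xs)) \<or> \<not> ctrl_enabled Q \<pi> (last xs)"
    using assms(2) unfolding max_fin_exec_def by blast+
  have init: "qinit Q (fst (xs ! 0))" "snd (xs ! 0) = m0"
    using hd ne by (simp_all add: hd_conv_nth)
  have last: "last xs = xs ! (length xs - 1)" "last xs \<in> set xs"
    using ne by (simp_all add: last_conv_nth)
  have "\<forall>i < length xs - 1. cstep Q \<pi> \<epsilon> (xs ! i) (xs ! Suc i) \<and> \<not> qgoal Q (fst (xs ! i))"
  proof (intro allI impI conjI)
    fix i assume "i < length xs - 1"
    then show "cstep Q \<pi> \<epsilon> (xs ! i) (xs ! Suc i)" "\<not> qgoal Q (fst (xs ! i))"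
      using steps no_goal nth_mem[of i xs] by auto
  qed
  then have "treach Q \<pi> (tinit Q) (tstate_of (last xs))"
    using treach_execution[where x = "nth xs", OF init] last(1) by metis
  moreover have "\<not> tgoal Q (tstate_of (last xs))"
    using no_goal last(2) by simp
  ultimately have "ctrl_enabled Q \<pi> (last xs)"
    using strong_cyclic_enabled[OF assms(1)] by (simp add: ctrl_enabled_def tstate_of_def)
  then show False
    using maximal no_goal last(2) by blast
qed

locale infinite_execution =
  fixes Q :: "('f, 'v, 'a) qnp" and \<pi> :: "('f, 'v, 'a) policy" and \<epsilon> :: real
    and f :: "nat \<Rightarrow> ('f, 'v) qstate \<times> 'v mem"
  assumes wf: "wf_qnp Q" and eps_pos: "\<epsilon> > 0" and exec: "max_inf_exec Q \<pi> \<epsilon> f"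
begin

abbreviation s :: "nat \<Rightarrow> ('f, 'v) qstate" where "s t \<equiv> fst (f t)"
abbreviation m :: "nat \<Rightarrow> 'v mem" where "m t \<equiv> snd (f t)"

definition act :: "nat \<Rightarrow> ('v, 'a) tact" where
  "act t = the (\<pi> (tstate_of (f t)))"

lemma cstep: "cstep Q \<pi> \<epsilon> (f t) (f (Suc t))"
  using exec by (simp add: max_inf_exec_def)

lemma no_goal: "\<not> qgoal Q (s t)"
  using exec by (simp add: max_inf_exec_def)

lemma reachable: "treach Q \<pi> (tinit Q) (tstate_of (f t))" and qstate_ok: "qstate_ok (s t)"
proof -
  have "qinit Q (s 0)" "m 0 = m0"
    using exec by (simp_all add: max_inf_exec_def)
  from treach_execution[of Q f, OF this] cstep no_goal
  show "treach Q \<pi> (tinit Q) (tstate_of (f t))" "qstate_ok (s t)" by blast+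
qed

lemma act_step:
  "\<pi> (tstate_of (f t)) = Some (act t)" "tact_valid Q (act t)" "tpre Q (act t) (tstate_of (f t))"
  "m (Suc t) = mem_eff Q (act t) (m t)"
  "case act t of Op a \<Rightarrow> s (Suc t) \<in> qsucc Q a (s t)
     | OpDec a X d \<Rightarrow> s (Suc t) \<in> qsucc Q a (s t) | _ \<Rightarrow> s (Suc t) = s t"
  "eps_ok \<epsilon> (s t) (s (Suc t))"
proof -
  obtain b where b: "\<pi> (tstate_of (f t)) = Some b" "tact_valid Q b" "tpre Q b (tstate_of (f t))"
    "m (Suc t) = mem_eff Q b (m t)"
    "case b of Op a \<Rightarrow> s (Suc t) \<in> qsucc Q a (s t)
       | OpDec a X d \<Rightarrow> s (Suc t) \<in> qsucc Q a (s t) | _ \<Rightarrow> s (Suc t) = s t"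
    "eps_ok \<epsilon> (s t) (s (Suc t))"
    using cstep[of t] by (rule cstepE)
  moreover have "act t = b" using b(1) by (simp add: act_def)
  ultimately show
    "\<pi> (tstate_of (f t)) = Some (act t)" "tact_valid Q (act t)" "tpre Q (act t) (tstate_of (f t))"
    "m (Suc t) = mem_eff Q (act t) (m t)"
    "case act t of Op a \<Rightarrow> s (Suc t) \<in> qsucc Q a (s t)
       | OpDec a X d \<Rightarrow> s (Suc t) \<in> qsucc Q a (s t) | _ \<Rightarrow> s (Suc t) = s t"
    "eps_ok \<epsilon> (s t) (s (Suc t))"
    by blast+
qed

lemma act_tsucc: "tstate_of (f (Suc t)) \<in> tsucc Q (act t) (tstate_of (f t))"
proof -
  obtain b where "\<pi> (tstate_of (f t)) = Some b" "tstate_of (f (Suc t)) \<in> tsucc Q b (tstate_of (f t))"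
    using cstep_tsucc[OF cstep qstate_ok] by blast
  then show ?thesis using act_step(1) by simp
qed

lemma stack_wf: "stack_wf (m t)"
proof (induction t)
  case 0
  then show ?case using exec stack_wf_m0 by (simp add: max_inf_exec_def)
next
  case (Suc t)
  then show ?case
    using stack_wf_mem_eff[of "m t" Q "act t" "bar (s t)"] act_step(3,4)[of t]
    by (simp add: tstate_of_def)
qed

lemma qnp_action_step:
  assumes "act t = Op a \<or> act t = OpDec a X d"
  shows "s (Suc t) \<in> qsucc Q a (s t)" "\<forall>l \<in> Qpre Q a. lit_holds (bar (s t)) l"
    "\<forall>Y \<in> Qinc Q a. \<not> m_in (m t) Y"
  using assms act_step(3,5)[of t] by (auto simp: tpre_def tstate_of_def Let_def)

lemma m_index_stable:
  assumes "\<forall>t\<ge>T. \<not> changes_stack_upto d (act t)" "e \<le> d" "T \<le> t"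
  shows "m_index (m t) X e = m_index (m T) X e"
  using assms(3)
proof (induction t rule: dec_induct)
  case (step t)
  then show ?case
    using assms(1,2) act_step(4)[of t] m_index_mem_eff_stable[of d "act t" e Q "m t" X] by simp
qed simp

lemma in_stack_nonincreasing:
  assumes "m_in (m t) X"
  shows "qn (s (Suc t)) X \<le> qn (s t) X"
proof -
  have "qn (s (Suc t)) X \<le> qn (s t) X" if "act t = Op a \<or> act t = OpDec a Y d" for a Y d
  proof -
    have "X \<notin> Qinc Q a" using qnp_action_step(3)[OF that] assms by blast
    then show ?thesis by (rule qsucc_le_unless_inc[OF qnp_action_step(1)[OF that]])
  qed
  then show ?thesis using act_step(5)[of t] by (cases "act t") auto
qed

lemma OpDec_decreases:
  assumes "act t = OpDec a X e"
  shows "0 < qn (s t) X" "qn (s (Suc t)) X = 0 \<or> qn (s (Suc t)) X \<le> qn (s t) X - \<epsilon>"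
proof -
  have "a \<in> QO Q" "X \<in> Qdec Q a"
    using act_step(2)[of t] assms by (simp_all add: tact_valid_def)
  then have "(ZA X, False) \<in> Qpre Q a"
    using wf by (simp add: wf_qnp_def)
  then have "qn (s t) X \<noteq> 0"
    using qnp_action_step(2)[of t a X e] assms by (auto simp: lit_holds_def bar_def)
  then show "0 < qn (s t) X"
    using qstate_ok[of t] by (simp add: qstate_ok_def less_le)
  have less: "qn (s (Suc t)) X < qn (s t) X"
    using qnp_action_step(1)[of t a X e] assms \<open>X \<in> Qdec Q a\<close> by (simp add: qsucc_def)
  then have "\<bar>qn (s (Suc t)) X - qn (s t) X\<bar> \<ge> \<epsilon> \<or> qn (s (Suc t)) X = 0"
    using act_step(6)[of t] unfolding eps_ok_def by force
  then show "qn (s (Suc t)) X = 0 \<or> qn (s (Suc t)) X \<le> qn (s t) X - \<epsilon>"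
    using less by linarith
qed

lemma eventually_no_OpDec_on_stack:
  assumes "\<forall>\<^sub>F t in sequentially. m_in (m t) X"
  shows "\<forall>\<^sub>F t in sequentially. \<forall>a e. act t \<noteq> OpDec a X e"
proof -
  have nonneg: "0 \<le> qn (s t) X" for t
    using qstate_ok[of t] by (simp add: qstate_ok_def)
  \<comment> \<open>An \<open>\<epsilon>\<close>-step on \<open>X\<close> either drops it by \<open>\<epsilon>\<close> or sets it to 0; shifting the
    positive values by \<open>\<epsilon>\<close> makes both a drop of at least \<open>\<epsilon>\<close>.\<close>
  define g where "g t = (if qn (s t) X = 0 then 0 else qn (s t) X + \<epsilon>)" for t
  have "\<forall>\<^sub>F t in sequentially. g (Suc t) \<le> g t
      \<and> ((\<exists>a e. act t = OpDec a X e) \<longrightarrow> 0 \<le> g t \<and> g (Suc t) \<le> g t - \<epsilon>)"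
    using assms
  proof (rule eventually_mono, intro conjI impI)
    fix t assume "m_in (m t) X"
    then have "qn (s (Suc t)) X \<le> qn (s t) X"
      by (rule in_stack_nonincreasing)
    then show "g (Suc t) \<le> g t"
      using nonneg[of t] nonneg[of "Suc t"] eps_pos by (simp add: g_def)
    show "0 \<le> g t"
      using nonneg[of t] eps_pos by (simp add: g_def)
    assume "\<exists>a e. act t = OpDec a X e"
    then obtain a e where "act t = OpDec a X e" by blast
    then show "g (Suc t) \<le> g t - \<epsilon>"
      using OpDec_decreases[of t a X e] nonneg[of "Suc t"] eps_pos unfolding g_def by auto
  qed
  then have "\<forall>\<^sub>F t in sequentially. \<not> (\<exists>a e. act t = OpDec a X e)"
    by (rule eventually_not_by_descent[OF eps_pos])
  then show ?thesis by simp
qed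

lemma eventually_no_OpDec_at:
  assumes "\<forall>\<^sub>F t in sequentially. \<not> changes_stack_upto d (act t)" "e \<le> d"
  shows "\<forall>\<^sub>F t in sequentially. \<forall>a. act t \<noteq> OpDec a X e"
proof -
  obtain T where T: "\<forall>t\<ge>T. \<not> changes_stack_upto d (act t)"
    using assms(1) by (auto simp: eventually_sequentially)
  have index: "m_index (m t) X e = m_index (m T) X e" if "T \<le> t" for t
    using m_index_stable[OF T assms(2) that] .
  show ?thesis
  proof (cases "m_index (m T) X e")
    case False
    have "m_index (m t) X e" if "act t = OpDec a X e" for t a
      using act_step(3)[of t] that by (simp add: tpre_def tstate_of_def Let_def)
    then have "\<forall>t\<ge>T. \<forall>a. act t \<noteq> OpDec a X e"
      using index False by blast
    then show ?thesis by (auto simp: eventually_sequentially)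
  next
    case True
    have "m_in (m t) X" if "T \<le> t" for t
      using index[OF that] True stack_wf[of t] unfolding stack_wf_def by blast
    then have "\<forall>\<^sub>F t in sequentially. m_in (m t) X"
      by (auto simp: eventually_sequentially)
    then show ?thesis
      by (rule eventually_mono[OF eventually_no_OpDec_on_stack]) blast
  qed
qed

lemma eventually_no_OpDec_upto:
  assumes "\<forall>\<^sub>F t in sequentially. \<not> changes_stack_upto d (act t)"
  shows "\<forall>\<^sub>F t in sequentially. \<forall>a X e. act t = OpDec a X e \<longrightarrow> d < e"
proof -
  have "finite (QV Q \<times> {..d})"
    using wf by (simp add: wf_qnp_def)
  moreover have "\<forall>p \<in> QV Q \<times> {..d}. \<forall>\<^sub>F t in sequentially. \<forall>a. act t \<noteq> OpDec a (fst p) (snd p)"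
    using eventually_no_OpDec_at[OF assms] by auto
  ultimately have "\<forall>\<^sub>F t in sequentially. \<forall>p \<in> QV Q \<times> {..d}. \<forall>a. act t \<noteq> OpDec a (fst p) (snd p)"
    by (rule eventually_ball_finite)
  then show ?thesis
  proof (rule eventually_mono)
    fix t assume none: "\<forall>p \<in> QV Q \<times> {..d}. \<forall>a. act t \<noteq> OpDec a (fst p) (snd p)"
    show "\<forall>a X e. act t = OpDec a X e \<longrightarrow> d < e"
    proof (intro allI impI)
      fix a X e assume act: "act t = OpDec a X e"
      then have "X \<in> QV Q"
        using act_step(2)[of t] wf by (auto simp: tact_valid_def wf_qnp_def)
      then show "d < e"
        using none act by (metis SigmaI atMost_iff fst_conv snd_conv not_le)
    qed
  qed
qed

lemma eventually_no_Push_at: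
  assumes "\<forall>\<^sub>F t in sequentially. \<not> changes_stack_upto d (act t)"
  shows "\<forall>\<^sub>F t in sequentially. \<forall>X. act t \<noteq> Push X d"
proof -
  \<comment> \<open>Only \<open>Push X (d - 1)\<close> and decrements \<open>a(X,e)\<close> with \<open>e \<le> d\<close> reset \<open>c(d)\<close>, and both
    are excluded here; each \<open>Push X d\<close> raises \<open>c(d)\<close>, which stays below \<open>Max\<close>.\<close>
  define g where "g t = - real (m_c (m t) d)" for t
  have "\<forall>\<^sub>F t in sequentially. \<not> changes_stack_upto d (act t)
      \<and> (\<forall>a X e. act t = OpDec a X e \<longrightarrow> d < e)"
    using assms eventually_no_OpDec_upto[OF assms] by (rule eventually_conj)
  then have "\<forall>\<^sub>F t in sequentially. g (Suc t) \<le> g t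
      \<and> ((\<exists>X. act t = Push X d) \<longrightarrow> - real (Maxc Q) \<le> g t \<and> g (Suc t) \<le> g t - 1)"
  proof (rule eventually_mono, intro conjI impI)
    fix t assume "\<not> changes_stack_upto d (act t) \<and> (\<forall>a X e. act t = OpDec a X e \<longrightarrow> d < e)"
    then show "g (Suc t) \<le> g t"
      using m_c_mem_eff_mono[of d "act t" "m t" Q] act_step(4)[of t] by (simp add: g_def)
    assume "\<exists>X. act t = Push X d"
    then obtain X where "act t = Push X d" ..
    then have "m_c (m t) d < Maxc Q" "m_c (m (Suc t)) d = Suc (m_c (m t) d)"
      using act_step(3,4)[of t] by (simp_all add: tpre_def tstate_of_def Let_def m_c_mem_eff)
    then show "- real (Maxc Q) \<le> g t" "g (Suc t) \<le> g t - 1"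
      by (simp_all add: g_def)
  qed
  then have "\<forall>\<^sub>F t in sequentially. \<not> (\<exists>X. act t = Push X d)"
    by (rule eventually_not_by_descent[rotated]) simp
  then show ?thesis by simp
qed

lemma eventually_no_Pop_at:
  assumes "\<forall>\<^sub>F t in sequentially. \<forall>X. act t \<noteq> Push X d"
  shows "\<forall>\<^sub>F t in sequentially. \<forall>X. act t \<noteq> Pop X (Suc d)"
proof -
  define occupied where "occupied t = {X \<in> QV Q. m_index (m t) X (Suc d)}" for t
  have fin: "finite (occupied t)" for t
    using wf by (simp add: occupied_def wf_qnp_def)
  have "\<forall>\<^sub>F t in sequentially. real (card (occupied (Suc t))) \<le> real (card (occupied t))
      \<and> ((\<exists>X. act t = Pop X (Suc d)) \<longrightarrow>
          0 \<le> real (card (occupied t)) \<and> real (card (occupied (Suc t))) \<le> real (card (occupied t)) - 1)"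
    using assms
  proof (rule eventually_mono, intro conjI impI)
    fix t assume no_push: "\<forall>X. act t \<noteq> Push X d"
    have subset: "occupied (Suc t) \<subseteq> occupied t"
      using m_index_mem_eff_Suc[OF no_push] act_step(4)[of t] by (auto simp: occupied_def)
    then show "real (card (occupied (Suc t))) \<le> real (card (occupied t))"
      by (simp add: card_mono fin)
    show "0 \<le> real (card (occupied t))" by simp
    assume "\<exists>X. act t = Pop X (Suc d)"
    then obtain X where "act t = Pop X (Suc d)" ..
    then have "X \<in> occupied t" "X \<notin> occupied (Suc t)"
      using act_step(2,3,4)[of t]
      by (auto simp: occupied_def tact_valid_def tpre_def tstate_of_def Let_def m_index_mem_eff)
    with subset have "occupied (Suc t) \<subset> occupied t" by blast
    then have "card (occupied (Suc t)) < card (occupied t)"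
      by (rule psubset_card_mono[OF fin])
    then show "real (card (occupied (Suc t))) \<le> real (card (occupied t)) - 1"
      by linarith
  qed
  then have "\<forall>\<^sub>F t in sequentially. \<not> (\<exists>X. act t = Pop X (Suc d))"
    by (rule eventually_not_by_descent[rotated]) simp
  then show ?thesis by simp
qed

lemma eventually_stack_unchanged_upto:
  "\<forall>\<^sub>F t in sequentially. \<not> changes_stack_upto d (act t)"
proof (induction d)
  case 0
  have "\<not> changes_stack_upto 0 (act t)" for t
    using act_step(2)[of t] by (cases "act t") (auto simp: tact_valid_def)
  then show ?case by simp
next
  case (Suc d)
  have no_push: "\<forall>\<^sub>F t in sequentially. \<forall>X. act t \<noteq> Push X d"
    using eventually_no_Push_at[OF Suc] .
  show ?case
    using Suc no_push eventually_no_Pop_at[OF no_push]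
    by eventually_elim (simp add: changes_stack_upto_Suc)
qed

lemma eventually_no_OpDec: "\<forall>\<^sub>F t in sequentially. \<forall>a X e. act t \<noteq> OpDec a X e"
  using eventually_no_OpDec_upto[OF eventually_stack_unchanged_upto[of "nV Q"]]
proof (rule eventually_mono)
  fix t assume "\<forall>a X e. act t = OpDec a X e \<longrightarrow> nV Q < e"
  then show "\<forall>a X e. act t \<noteq> OpDec a X e"
    using act_step(2)[of t] by (auto simp: tact_valid_def)
qed

lemma treach_stays_on_execution:
  assumes "\<forall>t\<ge>T. \<forall>a X e. act t \<noteq> OpDec a X e" "treach Q \<pi> t0 g" "t0 = tstate_of (f k)" "T \<le> k"
  shows "\<exists>k'\<ge>T. g = tstate_of (f k')"
  using assms(2,3)
proof (induction rule: treach.induct)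
  case refl
  then show ?case using assms(4) by blast
next
  case (step t t' b t'')
  then obtain k' where k': "T \<le> k'" "t' = tstate_of (f k')" by blast
  then have "t'' \<in> tsucc Q (act k') (tstate_of (f k'))"
    using step.hyps(3,6) act_step(1)[of k'] by simp
  moreover have "\<forall>a X e. act k' \<noteq> OpDec a X e"
    using assms(1) k'(1) by blast
  ultimately have "t'' = tstate_of (f (Suc k'))"
    using tsucc_deterministic act_tsucc by blast
  then show ?case using k'(1) le_SucI by blast
qed

lemma not_strong_cyclic: "\<not> strong_cyclic Q \<pi>"
proof
  assume "strong_cyclic Q \<pi>"
  obtain T where T: "\<forall>t\<ge>T. \<forall>a X e. act t \<noteq> OpDec a X e"
    using eventually_no_OpDec by (auto simp: eventually_sequentially)
  obtain g where g: "treach Q \<pi> (tstate_of (f T)) g" "tgoal Q g"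
    using \<open>strong_cyclic Q \<pi>\<close> reachable[of T] unfolding strong_cyclic_def by blast
  obtain k where "g = tstate_of (f k)"
    using treach_stays_on_execution[OF T g(1) HOL.refl order_refl] by blast
  then show False using g(2) no_goal[of k] by simp
qed

end

theorem theorem13:
  fixes Q :: "('f, 'v, 'a) qnp" and \<pi> :: "('f, 'v, 'a) policy"
  assumes "wf_qnp Q"
    and "strong_cyclic Q \<pi>"
  shows "controller_solves Q \<pi>"
  unfolding controller_solves_def
proof (intro allI impI conjI)
  fix \<epsilon> :: real and xs
  assume "max_fin_exec Q \<pi> \<epsilon> xs"
  then show "\<exists>x \<in> set xs. qgoal Q (fst x)"
    using max_fin_exec_reaches_goal assms(2) by blast
next
  fix \<epsilon> :: real and f
  assume "\<epsilon> > 0" "max_inf_exec Q \<pi> \<epsilon> f"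
  then interpret infinite_execution Q \<pi> \<epsilon> f
    using assms(1) by unfold_locales
  show "\<exists>i. qgoal Q (fst (f i))"
    using not_strong_cyclic assms(2) by blast
qed

end
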